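(* Let $E$ be a Banach lattice whose dual space $E'$ is order continuous, and let $X$ be a Banach space. Then every Dunford-Pettis operator $T\colon E\to X$ is $uaw$-Dunford-Pettis.
   Context: All operators are bounded linear operators. A net $(x_\alpha)$ in a Banach lattice $E$ is $uaw$-convergent to $x\in E$ (written $x_\alpha\xrightarrow{uaw}x$) if for every $u\in E_+$ the net $|x_\alpha-x|\wedge u$ converges weakly to $0$. An operator $T\colon E\to X$ from a Banach lattice to a Banach space is Dunford-Pettis if it maps weakly null sequences to norm null sequences. It is $uaw$-Dunford-Pettis if for every norm bounded sequence $(x_n)$ in $E$ with $x_n\xrightarrow{uaw}0$ one has $\|T(x_n)\|\to 0$. *)

theory Defs
  imports "HOL-Analysis.Analysis"
begin

class banach_lattice = banach + ordered_real_vector + lattice +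
  assumes lattice_norm: "sup x (- x) \<le> sup y (- y) \<Longrightarrow> norm x \<le> norm y"

definition lmod :: "'a::banach_lattice \<Rightarrow> 'a" where
  "lmod x = sup x (- x)"

definition dual_le :: "('a::banach_lattice \<Rightarrow>\<^sub>L real) \<Rightarrow> ('a \<Rightarrow>\<^sub>L real) \<Rightarrow> bool" where
  "dual_le f g \<longleftrightarrow> (\<forall>x. 0 \<le> x \<longrightarrow> blinfun_apply f x \<le> blinfun_apply g x)"

text \<open>The dual E' has order continuous norm: every downward directed set D in E'
with infimum 0 (i.e. a net decreasing to 0) satisfies inf of norms = 0, i.e. the
decreasing net converges to 0 in norm.\<close>
definition dual_order_continuous :: "'a::banach_lattice itself \<Rightarrow> bool" where
  "dual_order_continuous _ \<longleftrightarrow>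
     (\<forall>D :: ('a \<Rightarrow>\<^sub>L real) set.
        D \<noteq> {} \<and>
        (\<forall>f\<in>D. \<forall>g\<in>D. \<exists>h\<in>D. dual_le h f \<and> dual_le h g) \<and>
        (\<forall>f\<in>D. dual_le 0 f) \<and>
        (\<forall>h. (\<forall>f\<in>D. dual_le h f) \<longrightarrow> dual_le h 0)
        \<longrightarrow> (\<forall>e>0. \<exists>f\<in>D. norm f < e))"

definition weakly_null :: "(nat \<Rightarrow> 'a::real_normed_vector) \<Rightarrow> bool" where
  "weakly_null x \<longleftrightarrow> (\<forall>f :: 'a \<Rightarrow>\<^sub>L real. (\<lambda>n. blinfun_apply f (x n)) \<longlonglongrightarrow> 0)"

definition uaw_null :: "(nat \<Rightarrow> 'a::banach_lattice) \<Rightarrow> bool" where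
  "uaw_null x \<longleftrightarrow> (\<forall>u. 0 \<le> u \<longrightarrow> weakly_null (\<lambda>n. inf (lmod (x n)) u))"

definition dunford_pettis :: "('a::banach_lattice \<Rightarrow>\<^sub>L 'b::banach) \<Rightarrow> bool" where
  "dunford_pettis T \<longleftrightarrow>
     (\<forall>x. weakly_null x \<longrightarrow> (\<lambda>n. norm (blinfun_apply T (x n))) \<longlonglongrightarrow> 0)"

definition uaw_dunford_pettis :: "('a::banach_lattice \<Rightarrow>\<^sub>L 'b::banach) \<Rightarrow> bool" where
  "uaw_dunford_pettis T \<longleftrightarrow>
     (\<forall>x. bounded (range x) \<and> uaw_null x \<longrightarrow> (\<lambda>n. norm (blinfun_apply T (x n))) \<longlonglongrightarrow> 0)"

end

(*
  Since T is Dunford-Pettis, it suffices that a norm bounded uaw-null sequence (x n) is weakly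
  null. Every functional is dominated by its modulus, |f x| <= |f| |x|, so it suffices that
  g |x n| --> 0 for every positive g. If this fails, a greedy choice yields terms a k of the
  sequence with g (a k) >= delta but g (inf (a k) (4^k S k)) < delta/4, where S k is the sum of
  the earlier terms; disjointifying them gives a bounded disjoint sequence d k <= a k with
  g (d k) >= delta/2 for large k. But when E' is order continuous, positive functionals vanish
  along bounded disjoint sequences: with s = sum 2^-n d n, the restrictions of g to the bands
  generated by the tails of s decrease to 0 in the dual order, hence in norm, and d n lies in
  the band of every tail starting at or before n.
*)
theory Submission
  imports Defs "HOL-Library.Lattice_Algebras"
begin

context banach_lattice begin
subclass lattice_ab_group_add ..
end

declare scaleR_nonneg_nonneg [simp]

section \<open>Vector lattice arithmetic\<close>

lemma inf_add_le_add_inf: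
  fixes a b c :: "'a::lattice_ab_group_add"
  assumes "0 \<le> a" "0 \<le> b" "0 \<le> c"
  shows "inf a (b + c) \<le> inf a b + inf a c"
proof -
  have "inf a b + inf a c = inf (inf (a + a) (b + a)) (inf (a + c) (b + c))"
    by (simp add: add_inf_distrib_left add_inf_distrib_right)
  moreover have "inf a (b + c) \<le> a + a" "inf a (b + c) \<le> a + c" "inf a (b + c) \<le> b + a"
    using assms by (auto intro: inf.coboundedI1)
  moreover have "inf a (b + c) \<le> b + c" by simp
  ultimately show ?thesis by simp
qed

lemma inf_sum_eq_zero:
  fixes a :: "'a::lattice_ab_group_add"
  assumes "finite B" "0 \<le> a" "\<And>b. b \<in> B \<Longrightarrow> 0 \<le> g b" "\<And>b. b \<in> B \<Longrightarrow> inf a (g b) = 0"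
  shows "inf a (sum g B) = 0"
  using assms(1,3,4)
proof (induction B rule: finite_induct)
  case empty
  then show ?case using assms(2) by (simp add: inf_absorb2)
next
  case (insert x F)
  have F: "0 \<le> sum g F" using insert by (simp add: sum_nonneg)
  have "inf a (g x + sum g F) \<le> inf a (g x) + inf a (sum g F)"
    using assms(2) insert F by (intro inf_add_le_add_inf) auto
  moreover have "0 \<le> inf a (g x + sum g F)" using assms(2) insert F by simp
  ultimately show ?case using insert by simp
qed

lemma inf_add_inf_le_of_disjoint:
  fixes y p q :: "'a::lattice_ab_group_add"
  assumes "0 \<le> y" "inf p q = 0"
  shows "inf y p + inf y q \<le> y"
proof -
  have "inf y p + inf y q = sup (inf y p) (inf y q) + inf (inf y p) (inf y q)"
    by (rule add_eq_inf_sup)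
  moreover have "inf (inf y p) (inf y q) \<le> inf p q" by (intro inf_mono) auto
  moreover have "sup (inf y p) (inf y q) \<le> y" by simp
  ultimately show ?thesis using assms(2) by (metis add_mono add.right_neutral)
qed

lemma diff_inf_diff_le_pprt:
  fixes a b c :: "'a::lattice_ab_group_add"
  assumes "0 \<le> c"
  shows "a - inf a b - c \<le> pprt (a - b - c)"
proof -
  have "a - inf a b - c = sup (- c) (a - b - c)"
  proof -
    have "a - inf a b = sup 0 (a - b)" by (simp add: add_sup_distrib_left)
    then show ?thesis by (simp only: diff_conv_add_uminus add_sup_distrib_right) simp
  qed
  also have "\<dots> \<le> sup 0 (a - b - c)" using assms by (intro sup_mono) auto
  finally show ?thesis by (simp add: pprt_def sup_commute)
qed

lemma diff_diff_le_diff: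
  fixes a b c d :: "'a::ordered_ab_group_add"
  assumes "d \<le> b + c"
  shows "a - b - c \<le> a - d"
  using assms by (simp add: diff_diff_eq diff_left_mono)

lemma lmod_nonneg: "0 \<le> lmod x"
proof -
  have "x \<le> lmod x" "- x \<le> lmod x" by (auto simp: lmod_def)
  then have "0 \<le> lmod x + lmod x" by (metis add_mono add.right_inverse)
  then show ?thesis by simp
qed

lemma lmod_uminus: "lmod (- x) = lmod x"
  by (simp add: lmod_def sup_commute)

lemma lmod_eq_self: "0 \<le> x \<Longrightarrow> lmod x = x"
  unfolding lmod_def by (meson neg_le_0_iff_le order_trans sup.absorb1)

lemma pprt_le_lmod: "pprt x \<le> lmod x"
  using lmod_nonneg[of x] by (auto simp: pprt_def lmod_def)

lemma uminus_nprt_le_lmod: "- nprt x \<le> lmod x"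
  using lmod_nonneg[of x] by (auto simp: nprt_def lmod_def)

lemma scaleR_inf_distrib:
  fixes a b :: "'a::banach_lattice"
  assumes "0 \<le> c"
  shows "c *\<^sub>R inf a b = inf (c *\<^sub>R a) (c *\<^sub>R b)"
proof (cases "c = 0")
  case False
  with assms have c: "c > 0" by simp
  show ?thesis
  proof (rule antisym)
    show "c *\<^sub>R inf a b \<le> inf (c *\<^sub>R a) (c *\<^sub>R b)"
      using assms by (simp add: scaleR_left_mono)
    have "(1/c) *\<^sub>R inf (c *\<^sub>R a) (c *\<^sub>R b) \<le> (1/c) *\<^sub>R (c *\<^sub>R a)"
      "(1/c) *\<^sub>R inf (c *\<^sub>R a) (c *\<^sub>R b) \<le> (1/c) *\<^sub>R (c *\<^sub>R b)"
      using c by (intro scaleR_left_mono; simp)+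
    with c have "(1/c) *\<^sub>R inf (c *\<^sub>R a) (c *\<^sub>R b) \<le> inf a b" by simp
    then have "c *\<^sub>R ((1/c) *\<^sub>R inf (c *\<^sub>R a) (c *\<^sub>R b)) \<le> c *\<^sub>R inf a b"
      using c by (intro scaleR_left_mono) auto
    with c show "inf (c *\<^sub>R a) (c *\<^sub>R b) \<le> c *\<^sub>R inf a b" by simp
  qed
qed simp

lemma scaleR_sup_distrib:
  fixes a b :: "'a::banach_lattice"
  assumes "0 \<le> c"
  shows "c *\<^sub>R sup a b = sup (c *\<^sub>R a) (c *\<^sub>R b)"
proof -
  have "c *\<^sub>R sup a b = - (c *\<^sub>R inf (- a) (- b))"
    by (simp only: sup_eq_neg_inf scaleR_minus_right)
  also have "\<dots> = sup (c *\<^sub>R a) (c *\<^sub>R b)"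
    by (simp only: scaleR_inf_distrib[OF assms] scaleR_minus_right neg_inf_eq_sup minus_minus)
  finally show ?thesis .
qed

lemma pprt_scaleR: "0 \<le> c \<Longrightarrow> pprt (c *\<^sub>R x) = c *\<^sub>R pprt (x::'a::banach_lattice)"
  unfolding pprt_def by (subst scaleR_sup_distrib) simp_all

lemma nprt_scaleR: "0 \<le> c \<Longrightarrow> nprt (c *\<^sub>R x) = c *\<^sub>R nprt (x::'a::banach_lattice)"
  unfolding nprt_def by (subst scaleR_inf_distrib) simp_all

lemma inf_pprt_uminus_nprt: "inf (pprt x) (- nprt x) = (0::'a::lattice_ab_group_add)"
proof -
  have "- nprt x = pprt x - x" by (subst (2) prts) simp
  moreover have "inf (pprt x) (pprt x - x) = pprt x + inf 0 (- x)"
    by (simp add: add_inf_distrib_left)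
  moreover have "inf 0 (- x) = - pprt x" by (simp add: pprt_def sup.commute)
  ultimately show ?thesis by simp
qed

lemma inf_scaleR_eq_zero:
  fixes a b :: "'a::banach_lattice"
  assumes "0 \<le> a" "0 \<le> b" "inf a b = 0" "0 \<le> c" "0 \<le> d"
  shows "inf (c *\<^sub>R a) (d *\<^sub>R b) = 0"
proof (rule antisym)
  have "inf (c *\<^sub>R a) (d *\<^sub>R b) \<le> inf (max c d *\<^sub>R a) (max c d *\<^sub>R b)"
    using assms by (intro inf_mono scaleR_right_mono) auto
  also have "\<dots> = 0" using assms scaleR_inf_distrib[of "max c d" a b] by simp
  finally show "inf (c *\<^sub>R a) (d *\<^sub>R b) \<le> 0" .
  show "0 \<le> inf (c *\<^sub>R a) (d *\<^sub>R b)" using assms by simp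
qed

text \<open>The second argument is \<open>1/c\<close> times the negative part of \<open>x - c y\<close>.\<close>
lemma inf_pprt_diff_scaleR_eq_zero:
  fixes x y :: "'a::banach_lattice"
  assumes "c > 0"
  shows "inf (pprt (x - c *\<^sub>R y)) (pprt (y - (1/c) *\<^sub>R x)) = 0"
proof -
  have "pprt (y - (1/c) *\<^sub>R x) = (1/c) *\<^sub>R (- nprt (x - c *\<^sub>R y))"
  proof -
    have "y - (1/c) *\<^sub>R x = (1/c) *\<^sub>R (- (x - c *\<^sub>R y))" using assms by (simp add: algebra_simps)
    moreover have "pprt ((1/c) *\<^sub>R (- (x - c *\<^sub>R y))) = (1/c) *\<^sub>R pprt (- (x - c *\<^sub>R y))"
      using assms by (intro pprt_scaleR) simp
    ultimately show ?thesis by (simp only: pprt_neg)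
  qed
  moreover have "inf (1 *\<^sub>R pprt (x - c *\<^sub>R y)) ((1/c) *\<^sub>R (- nprt (x - c *\<^sub>R y))) = 0"
    using assms by (intro inf_scaleR_eq_zero inf_pprt_uminus_nprt) simp_all
  ultimately show ?thesis by simp
qed

section \<open>Norm and order\<close>

lemma norm_mono_nonneg:
  fixes a b :: "'a::banach_lattice"
  assumes "0 \<le> a" "a \<le> b"
  shows "norm a \<le> norm b"
proof -
  have "0 \<le> b" using assms by simp
  then show ?thesis
    using assms lattice_norm[of a b] lmod_eq_self[of a] lmod_eq_self[of b] unfolding lmod_def by simp
qed

lemma norm_lmod [simp]: "norm (lmod x) = norm x"
proof -
  have "sup (lmod x) (- lmod x) = sup x (- x)"
    using lmod_eq_self[OF lmod_nonneg] unfolding lmod_def by simp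
  then show ?thesis using lattice_norm[of "lmod x" x] lattice_norm[of x "lmod x"] by simp
qed

lemma norm_pprt_le: "norm (pprt x) \<le> norm (x::'a::banach_lattice)"
  using norm_mono_nonneg[OF zero_le_pprt pprt_le_lmod] by simp

lemma norm_nprt_le: "norm (nprt x) \<le> norm (x::'a::banach_lattice)"
  using norm_mono_nonneg[OF _ uminus_nprt_le_lmod] by simp

lemma norm_nprt_le_norm_diff:
  fixes x b :: "'a::banach_lattice"
  assumes "0 \<le> b"
  shows "norm (nprt x) \<le> norm (b - x)"
proof -
  have "- nprt x = sup (- x) 0" by (simp add: nprt_def)
  also have "\<dots> \<le> sup (b - x) 0" using assms by (intro sup_mono) auto
  also have "\<dots> \<le> lmod (b - x)" using lmod_nonneg[of "b - x"] by (auto simp: lmod_def)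
  finally show ?thesis using norm_mono_nonneg[of "- nprt x" "lmod (b - x)"] by simp
qed

lemma nonneg_limit:
  fixes X :: "nat \<Rightarrow> 'a::banach_lattice"
  assumes "X \<longlonglongrightarrow> x" "eventually (\<lambda>n. 0 \<le> X n) sequentially"
  shows "0 \<le> x"
proof -
  have "(\<lambda>n. norm (X n - x)) \<longlonglongrightarrow> 0"
    using assms(1) by (simp add: LIM_zero_iff tendsto_norm_zero_iff)
  moreover have "eventually (\<lambda>n. norm (nprt x) \<le> norm (X n - x)) sequentially"
    using assms(2) by eventually_elim (rule norm_nprt_le_norm_diff)
  ultimately have "norm (nprt x) \<le> 0" by (intro tendsto_le[OF _ _ tendsto_const]) auto
  then show ?thesis by (simp add: zero_le_iff_zero_nprt)
qed

lemma sum_le_suminf_nonneg: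
  fixes e :: "nat \<Rightarrow> 'a::banach_lattice"
  assumes "summable e" "\<And>n. 0 \<le> e n"
  shows "sum e {..<N} \<le> suminf e"
proof -
  have "(\<lambda>n. sum e {..<n} - sum e {..<N}) \<longlonglongrightarrow> suminf e - sum e {..<N}"
    by (intro tendsto_diff summable_LIMSEQ assms tendsto_const)
  moreover have "eventually (\<lambda>n. 0 \<le> sum e {..<n} - sum e {..<N}) sequentially"
    using eventually_ge_at_top[of N] by eventually_elim (simp add: sum_mono2 assms(2))
  ultimately have "0 \<le> suminf e - sum e {..<N}" by (rule nonneg_limit)
  then show ?thesis by simp
qed

lemma le_suminf_nonneg:
  fixes e :: "nat \<Rightarrow> 'a::banach_lattice"
  assumes "summable e" "\<And>n. 0 \<le> e n"
  shows "e i \<le> suminf e"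
proof -
  have "e i \<le> sum e {..<Suc i}" using assms(2) by (simp add: sum_nonneg add_increasing)
  also have "\<dots> \<le> suminf e" by (rule sum_le_suminf_nonneg[OF assms])
  finally show ?thesis .
qed

section \<open>Positive functionals and the modulus of a functional\<close>

lemma dual_nonneg_apply: "dual_le 0 f \<Longrightarrow> 0 \<le> x \<Longrightarrow> 0 \<le> blinfun_apply f x"
  by (simp add: dual_le_def)

lemma dual_nonneg_mono:
  assumes "dual_le 0 f" "x \<le> y"
  shows "blinfun_apply f x \<le> blinfun_apply f y"
  using dual_nonneg_apply[OF assms(1), of "y - x"] assms(2) by (simp add: blinfun.diff_right)

lemma blinfun_apply_le_norm: "blinfun_apply f x \<le> norm f * norm x"
  for f :: "'a::real_normed_vector \<Rightarrow>\<^sub>L real"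
  using norm_blinfun[of f x] by simp

definition cone_extension :: "('a::banach_lattice \<Rightarrow> real) \<Rightarrow> 'a \<Rightarrow> real" where
  "cone_extension \<phi> x = \<phi> (pprt x) - \<phi> (- nprt x)"

lemma cone_extension_eq:
  assumes "\<phi> 0 = 0" "0 \<le> x"
  shows "cone_extension \<phi> x = \<phi> x"
  using assms by (simp add: cone_extension_def)

lemma cone_extension_add:
  assumes add: "\<And>x y. 0 \<le> x \<Longrightarrow> 0 \<le> y \<Longrightarrow> \<phi> (x + y) = \<phi> x + \<phi> y"
  shows "cone_extension \<phi> (x + y) = cone_extension \<phi> x + cone_extension \<phi> y"
proof -
  have add3: "\<phi> (a + b + c) = \<phi> a + \<phi> b + \<phi> c" if "0 \<le> a" "0 \<le> b" "0 \<le> c" for a b c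
    using that add[of "a + b" c] add[of a b] by simp
  have "pprt (x + y) + (- nprt x) + (- nprt y) = pprt x + pprt y + (- nprt (x + y))"
    using prts[of "x + y"] prts[of x] prts[of y] by (simp add: algebra_simps)
  then have "\<phi> (pprt (x + y)) + \<phi> (- nprt x) + \<phi> (- nprt y)
      = \<phi> (pprt x) + \<phi> (pprt y) + \<phi> (- nprt (x + y))"
    by (metis add3 zero_le_pprt nprt_le_zero neg_0_le_iff_le)
  then show ?thesis by (simp add: cone_extension_def)
qed

lemma cone_extension_scaleR:
  assumes hom: "\<And>c x. 0 \<le> c \<Longrightarrow> 0 \<le> x \<Longrightarrow> \<phi> (c *\<^sub>R x) = c * \<phi> x"
  shows "cone_extension \<phi> (c *\<^sub>R x) = c * cone_extension \<phi> x"
proof -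
  have nonneg: "cone_extension \<phi> (c *\<^sub>R x) = c * cone_extension \<phi> x" if "0 \<le> c" for c x
    using that by (simp add: cone_extension_def pprt_scaleR nprt_scaleR hom flip: scaleR_minus_right)
      (simp add: right_diff_distrib)
  show ?thesis
  proof (cases "0 \<le> c")
    case False
    then have "cone_extension \<phi> (c *\<^sub>R x) = - c * cone_extension \<phi> (- x)"
      using nonneg[of "- c" "- x"] by simp
    then show ?thesis by (simp add: cone_extension_def pprt_neg nprt_neg algebra_simps)
  qed (rule nonneg)
qed

lemma bounded_linear_cone_extension:
  assumes add: "\<And>x y. 0 \<le> x \<Longrightarrow> 0 \<le> y \<Longrightarrow> \<phi> (x + y) = \<phi> x + \<phi> y"
    and hom: "\<And>c x. 0 \<le> c \<Longrightarrow> 0 \<le> x \<Longrightarrow> \<phi> (c *\<^sub>R x) = c * \<phi> x"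
    and nonneg: "\<And>x. 0 \<le> x \<Longrightarrow> 0 \<le> \<phi> x"
    and bound: "\<And>x. 0 \<le> x \<Longrightarrow> \<phi> x \<le> C * norm x"
  shows "bounded_linear (cone_extension \<phi>)"
proof (rule bounded_linear_intro)
  have le: "C * norm y \<le> max C 0 * norm x" if "norm y \<le> norm x" for x y :: 'a
    using that by (intro order_trans[OF mult_right_mono[OF max.cobounded1] mult_left_mono]) auto
  fix x
  have "\<phi> (pprt x) \<le> max C 0 * norm x" "\<phi> (- nprt x) \<le> max C 0 * norm x"
    using bound[of "pprt x"] bound[of "- nprt x"] le[OF norm_pprt_le[of x]] le[OF norm_nprt_le[of x]]
    by simp_all
  moreover have "0 \<le> \<phi> (pprt x)" "0 \<le> \<phi> (- nprt x)" by (simp_all add: nonneg)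
  moreover have "norm x * (2 * max C 0) = 2 * (max C 0 * norm x)" "0 \<le> max C 0 * norm x" by simp_all
  ultimately show "norm (cone_extension \<phi> x) \<le> norm x * (2 * max C 0)"
    unfolding cone_extension_def real_norm_def abs_le_iff by linarith
qed (simp_all add: cone_extension_add[of \<phi>, OF add] cone_extension_scaleR[of \<phi>, OF hom])

lemma blinfun_cone_extension_apply:
  assumes "bounded_linear (cone_extension \<phi>)" "\<phi> 0 = 0" "0 \<le> x"
  shows "blinfun_apply (Blinfun (cone_extension \<phi>)) x = \<phi> x"
  using assms by (simp add: bounded_linear_Blinfun_apply cone_extension_eq)

text \<open>The Riesz-Kantorovich formula for the positive part of \<open>f\<close> in the dual lattice.\<close>
definition dual_pprt_on :: "('a::banach_lattice \<Rightarrow>\<^sub>L real) \<Rightarrow> 'a \<Rightarrow> real" where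
  "dual_pprt_on f y = (SUP z\<in>{0..y}. blinfun_apply f z)"

definition dual_pprt :: "('a::banach_lattice \<Rightarrow>\<^sub>L real) \<Rightarrow> ('a \<Rightarrow>\<^sub>L real)" where
  "dual_pprt f = Blinfun (cone_extension (dual_pprt_on f))"

lemma blinfun_apply_le_on_interval:
  fixes f :: "'a::banach_lattice \<Rightarrow>\<^sub>L real"
  assumes "0 \<le> z" "z \<le> y"
  shows "blinfun_apply f z \<le> norm f * norm y"
  using blinfun_apply_le_norm[of f z] norm_mono_nonneg[OF assms]
  by (meson mult_left_mono norm_ge_zero order_trans)

lemma dual_pprt_on_upper: "0 \<le> z \<Longrightarrow> z \<le> y \<Longrightarrow> blinfun_apply f z \<le> dual_pprt_on f y"
  unfolding dual_pprt_on_def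
  by (rule cSUP_upper) (auto intro!: bdd_aboveI2 blinfun_apply_le_on_interval)

lemma dual_pprt_on_least:
  "0 \<le> y \<Longrightarrow> (\<And>z. 0 \<le> z \<Longrightarrow> z \<le> y \<Longrightarrow> blinfun_apply f z \<le> M) \<Longrightarrow> dual_pprt_on f y \<le> M"
  unfolding dual_pprt_on_def by (rule cSUP_least) auto

lemma dual_pprt_on_add:
  fixes y1 y2 :: "'a::banach_lattice"
  assumes "0 \<le> y1" "0 \<le> y2"
  shows "dual_pprt_on f (y1 + y2) = dual_pprt_on f y1 + dual_pprt_on f y2"
proof (rule antisym)
  show "dual_pprt_on f (y1 + y2) \<le> dual_pprt_on f y1 + dual_pprt_on f y2"
  proof (rule dual_pprt_on_least)
    fix z assume z: "0 \<le> z" "z \<le> y1 + y2"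
    \<comment> \<open>Riesz decomposition: \<open>z = inf z y1 + (z - inf z y1)\<close> with \<open>z - inf z y1 \<le> y2\<close>.\<close>
    have "z - inf z y1 = sup 0 (z - y1)" by (simp add: add_sup_distrib_left)
    also have "\<dots> \<le> y2" using assms z by (simp add: algebra_simps)
    finally have "blinfun_apply f (z - inf z y1) \<le> dual_pprt_on f y2"
      by (intro dual_pprt_on_upper) (simp only: diff_ge_0_iff_ge, simp)
    moreover have "blinfun_apply f (inf z y1) \<le> dual_pprt_on f y1"
      using z assms by (intro dual_pprt_on_upper) simp_all
    ultimately show "blinfun_apply f z \<le> dual_pprt_on f y1 + dual_pprt_on f y2"
      using blinfun.diff_right[of f z "inf z y1"] by linarith
  qed (use assms in simp)
  have "blinfun_apply f z1 + blinfun_apply f z2 \<le> dual_pprt_on f (y1 + y2)"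
    if "0 \<le> z1" "z1 \<le> y1" "0 \<le> z2" "z2 \<le> y2" for z1 z2
    using that dual_pprt_on_upper[of "z1 + z2" "y1 + y2" f] by (simp add: add_mono blinfun.add_right)
  then have "dual_pprt_on f y1 \<le> dual_pprt_on f (y1 + y2) - blinfun_apply f z2"
    if "0 \<le> z2" "z2 \<le> y2" for z2
    using that assms by (intro dual_pprt_on_least) force+
  then have "dual_pprt_on f y2 \<le> dual_pprt_on f (y1 + y2) - dual_pprt_on f y1"
    using assms by (intro dual_pprt_on_least) force+
  then show "dual_pprt_on f y1 + dual_pprt_on f y2 \<le> dual_pprt_on f (y1 + y2)" by simp
qed

lemma dual_pprt_on_scaleR:
  fixes y :: "'a::banach_lattice"
  assumes "0 \<le> c" "0 \<le> y"
  shows "dual_pprt_on f (c *\<^sub>R y) = c * dual_pprt_on f y"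
proof (cases "c = 0")
  case True
  have "dual_pprt_on f 0 = 0"
    using dual_pprt_on_upper[of 0 0 f] by (intro antisym dual_pprt_on_least) (auto dest: antisym)
  with True show ?thesis by simp
next
  case False
  with assms have c: "c > 0" by simp
  show ?thesis
  proof (rule antisym)
    show "dual_pprt_on f (c *\<^sub>R y) \<le> c * dual_pprt_on f y"
    proof (rule dual_pprt_on_least)
      fix z assume z: "0 \<le> z" "z \<le> c *\<^sub>R y"
      have "(1/c) *\<^sub>R z \<le> (1/c) *\<^sub>R (c *\<^sub>R y)" using z c by (intro scaleR_left_mono) auto
      with z c have "blinfun_apply f ((1/c) *\<^sub>R z) \<le> dual_pprt_on f y"
        by (intro dual_pprt_on_upper) auto
      with c show "blinfun_apply f z \<le> c * dual_pprt_on f y"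
        by (simp add: blinfun.scaleR_right field_simps)
    qed (use assms in simp)
    have "dual_pprt_on f y \<le> dual_pprt_on f (c *\<^sub>R y) / c"
    proof (rule dual_pprt_on_least)
      fix z assume z: "0 \<le> z" "z \<le> y"
      then have "blinfun_apply f (c *\<^sub>R z) \<le> dual_pprt_on f (c *\<^sub>R y)"
        using c by (intro dual_pprt_on_upper scaleR_left_mono) auto
      with c show "blinfun_apply f z \<le> dual_pprt_on f (c *\<^sub>R y) / c"
        by (simp add: blinfun.scaleR_right field_simps)
    qed (use assms in simp)
    with c show "c * dual_pprt_on f y \<le> dual_pprt_on f (c *\<^sub>R y)" by (simp add: field_simps)
  qed
qed

lemma dual_pprt_apply:
  assumes "0 \<le> y"
  shows "blinfun_apply (dual_pprt f) y = dual_pprt_on f y"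
proof -
  have "bounded_linear (cone_extension (dual_pprt_on f))"
    by (rule bounded_linear_cone_extension[where C = "norm f"])
      (auto intro: dual_pprt_on_add dual_pprt_on_scaleR dual_pprt_on_least
        blinfun_apply_le_on_interval dual_pprt_on_upper[of 0, simplified])
  then show ?thesis
    unfolding dual_pprt_def using assms dual_pprt_on_scaleR[of 0 0 f]
    by (simp add: blinfun_cone_extension_apply)
qed

lemma dual_pprt_nonneg: "dual_le 0 (dual_pprt f)"
  unfolding dual_le_def using dual_pprt_on_upper[of 0 _ f] by (simp add: dual_pprt_apply)

lemma dual_pprt_ge: "0 \<le> y \<Longrightarrow> blinfun_apply f y \<le> blinfun_apply (dual_pprt f) y"
  using dual_pprt_on_upper[of y y f] by (simp add: dual_pprt_apply)

text \<open>The functional \<open>2 f\<^sup>+ - f\<close> is the modulus \<open>\<bar>f\<bar>\<close> of \<open>f\<close> in the dual lattice.\<close>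
lemma abs_blinfun_apply_le_lmod:
  fixes f :: "'a::banach_lattice \<Rightarrow>\<^sub>L real"
  shows "\<bar>blinfun_apply f x\<bar> \<le> blinfun_apply (2 *\<^sub>R dual_pprt f - f) (lmod x)"
proof -
  let ?p = "dual_pprt f"
  have q: "dual_le 0 (?p - f)" by (auto simp: dual_le_def blinfun.diff_left intro: dual_pprt_ge)
  have "blinfun_apply f x \<le> blinfun_apply (2 *\<^sub>R ?p - f) (lmod x)" for x
  proof -
    have "blinfun_apply f x = blinfun_apply f (pprt x) - blinfun_apply ?p (- nprt x)
        + blinfun_apply (?p - f) (- nprt x)"
      by (subst (1) prts[of x]) (simp add: blinfun.add_right blinfun.minus_right blinfun.diff_left)
    also have "\<dots> \<le> blinfun_apply ?p (lmod x) + blinfun_apply (?p - f) (lmod x)"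
    proof -
      have "blinfun_apply f (pprt x) \<le> blinfun_apply ?p (lmod x)"
        using dual_pprt_ge[OF zero_le_pprt] dual_nonneg_mono[OF dual_pprt_nonneg pprt_le_lmod]
        by (rule order_trans)
      moreover have "0 \<le> blinfun_apply ?p (- nprt x)"
        by (rule dual_nonneg_apply[OF dual_pprt_nonneg]) simp
      moreover have "blinfun_apply (?p - f) (- nprt x) \<le> blinfun_apply (?p - f) (lmod x)"
        by (rule dual_nonneg_mono[OF q uminus_nprt_le_lmod])
      ultimately show ?thesis by linarith
    qed
    finally show ?thesis by (simp add: blinfun.diff_left blinfun.scaleR_left)
  qed
  from this[of x] this[of "- x"] show ?thesis
    by (simp add: lmod_uminus blinfun.minus_right abs_le_iff)
qed

lemma dual_nonneg_modulus: "dual_le 0 (2 *\<^sub>R dual_pprt f - f)"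
  using abs_blinfun_apply_le_lmod[of f] lmod_eq_self unfolding dual_le_def
  by (metis abs_ge_zero blinfun.zero_left order_trans)

section \<open>Restriction of a positive functional to a band\<close>

text \<open>For \<open>0 \<le> a\<close> and positive \<open>f\<close>, \<open>band_functional a f\<close> is \<open>f\<close> restricted to the band
  generated by \<open>a\<close>, i.e. \<open>f \<circ> P\<close> with \<open>P y = sup\<^sub>t inf y (t a)\<close> for \<open>y \<ge> 0\<close>. The supremum is
  taken in \<real> after applying \<open>f\<close>, so no projection property of the lattice is needed.\<close>
definition band_component :: "'a::banach_lattice \<Rightarrow> ('a \<Rightarrow>\<^sub>L real) \<Rightarrow> 'a \<Rightarrow> real" where
  "band_component a f y = (SUP t\<in>{0..}. blinfun_apply f (inf y (t *\<^sub>R a)))"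

definition band_functional :: "'a::banach_lattice \<Rightarrow> ('a \<Rightarrow>\<^sub>L real) \<Rightarrow> ('a \<Rightarrow>\<^sub>L real)" where
  "band_functional a f = Blinfun (cone_extension (band_component a f))"

lemma band_component_least:
  "(\<And>t. 0 \<le> t \<Longrightarrow> blinfun_apply f (inf y (t *\<^sub>R a)) \<le> M) \<Longrightarrow> band_component a f y \<le> M"
  unfolding band_component_def by (rule cSUP_least) auto

lemma band_component_add_le:
  assumes "\<And>t1 t2. 0 \<le> t1 \<Longrightarrow> 0 \<le> t2 \<Longrightarrow>
    blinfun_apply f (inf y1 (t1 *\<^sub>R a)) + blinfun_apply f (inf y2 (t2 *\<^sub>R b)) \<le> M"
  shows "band_component a f y1 + band_component b f y2 \<le> M"
proof -
  have "band_component a f y1 \<le> M - blinfun_apply f (inf y2 (t2 *\<^sub>R b))" if "0 \<le> t2" for t2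
    using assms[OF _ that] by (intro band_component_least) force
  then have "band_component b f y2 \<le> M - band_component a f y1"
    by (intro band_component_least) force
  then show ?thesis by simp
qed

context
  fixes a :: "'a::banach_lattice" and f :: "'a \<Rightarrow>\<^sub>L real"
  assumes a: "0 \<le> a" and f: "dual_le 0 f"
begin

lemma band_component_upper:
  assumes "0 \<le> y" "0 \<le> t"
  shows "blinfun_apply f (inf y (t *\<^sub>R a)) \<le> band_component a f y"
  unfolding band_component_def
proof (rule cSUP_upper)
  show "bdd_above ((\<lambda>t. blinfun_apply f (inf y (t *\<^sub>R a))) ` {0..})"
    by (rule bdd_aboveI2[of _ _ "blinfun_apply f y"]) (simp add: dual_nonneg_mono[OF f])
qed (use assms in simp)

lemma band_component_le: "0 \<le> y \<Longrightarrow> band_component a f y \<le> blinfun_apply f y"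
  by (rule band_component_least) (simp add: dual_nonneg_mono[OF f])

lemma band_component_nonneg: "0 \<le> y \<Longrightarrow> 0 \<le> band_component a f y"
  using band_component_upper[of y 0] by (simp add: inf_absorb2)

lemma band_component_eq_apply:
  assumes "0 \<le> y" "0 \<le> t" "y \<le> t *\<^sub>R a"
  shows "band_component a f y = blinfun_apply f y"
  using band_component_upper[of y t] band_component_le[of y] assms by (simp add: inf_absorb1)

lemma band_component_le_norm: "0 \<le> y \<Longrightarrow> band_component a f y \<le> norm f * norm y"
  using band_component_le[of y] blinfun_apply_le_norm[of f y] by linarith

lemma band_component_add:
  assumes "0 \<le> y1" "0 \<le> y2"
  shows "band_component a f (y1 + y2) = band_component a f y1 + band_component a f y2"
proof (rule antisym)
  show "band_component a f (y1 + y2) \<le> band_component a f y1 + band_component a f y2"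
  proof (rule band_component_least)
    fix t :: real assume t: "0 \<le> t"
    have "inf (y1 + y2) (t *\<^sub>R a) \<le> inf y1 (t *\<^sub>R a) + inf y2 (t *\<^sub>R a)"
      using inf_add_le_add_inf[of "t *\<^sub>R a" y1 y2] t a assms by (simp add: inf_commute)
    from dual_nonneg_mono[OF f this] band_component_upper[OF assms(1) t] band_component_upper[OF assms(2) t]
    show "blinfun_apply f (inf (y1 + y2) (t *\<^sub>R a)) \<le> band_component a f y1 + band_component a f y2"
      by (simp add: blinfun.add_right)
  qed
  show "band_component a f y1 + band_component a f y2 \<le> band_component a f (y1 + y2)"
  proof (rule band_component_add_le)
    fix t1 t2 :: real assume t: "0 \<le> t1" "0 \<le> t2"
    let ?T = "max t1 t2"
    have "inf y1 (t1 *\<^sub>R a) + inf y2 (t2 *\<^sub>R a) \<le> inf y1 (?T *\<^sub>R a) + inf y2 (?T *\<^sub>R a)"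
      using a by (intro add_mono inf_mono scaleR_right_mono) auto
    also have "\<dots> \<le> inf (y1 + y2) ((2 * ?T) *\<^sub>R a)"
    proof (rule le_infI)
      have "inf y1 (?T *\<^sub>R a) + inf y2 (?T *\<^sub>R a) \<le> ?T *\<^sub>R a + ?T *\<^sub>R a"
        by (intro add_mono) auto
      then show "inf y1 (?T *\<^sub>R a) + inf y2 (?T *\<^sub>R a) \<le> (2 * ?T) *\<^sub>R a"
        by (simp add: scaleR_add_left [symmetric])
    qed (intro add_mono; simp)
    finally have "blinfun_apply f (inf y1 (t1 *\<^sub>R a)) + blinfun_apply f (inf y2 (t2 *\<^sub>R a))
        \<le> blinfun_apply f (inf (y1 + y2) ((2 * ?T) *\<^sub>R a))"
      using dual_nonneg_mono[OF f] by (simp add: blinfun.add_right [symmetric])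
    also have "\<dots> \<le> band_component a f (y1 + y2)"
      using assms t by (intro band_component_upper) auto
    finally show "blinfun_apply f (inf y1 (t1 *\<^sub>R a)) + blinfun_apply f (inf y2 (t2 *\<^sub>R a))
        \<le> band_component a f (y1 + y2)" .
  qed
qed

lemma band_component_scaleR:
  assumes c: "0 \<le> c" and y: "0 \<le> y"
  shows "band_component a f (c *\<^sub>R y) = c * band_component a f y"
proof (cases "c = 0")
  case True
  then show ?thesis using band_component_nonneg[of 0] band_component_le[of 0] by simp
next
  case False
  with c have c: "c > 0" by simp
  have scale: "inf (c *\<^sub>R y) (t *\<^sub>R a) = c *\<^sub>R inf y ((t / c) *\<^sub>R a)" for t
    using c by (simp add: scaleR_inf_distrib)
  show ?thesis
  proof (rule antisym)
    show "band_component a f (c *\<^sub>R y) \<le> c * band_component a f y"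
      using c y by (intro band_component_least)
        (auto simp: scale blinfun.scaleR_right intro!: mult_left_mono band_component_upper)
    have "band_component a f y \<le> band_component a f (c *\<^sub>R y) / c"
    proof (rule band_component_least)
      fix t :: real assume t: "0 \<le> t"
      have "blinfun_apply f (inf y (t *\<^sub>R a)) = blinfun_apply f (inf (c *\<^sub>R y) ((c * t) *\<^sub>R a)) / c"
        using c by (simp add: scale blinfun.scaleR_right)
      also have "\<dots> \<le> band_component a f (c *\<^sub>R y) / c"
        using c t y by (intro divide_right_mono band_component_upper) auto
      finally show "blinfun_apply f (inf y (t *\<^sub>R a)) \<le> band_component a f (c *\<^sub>R y) / c" .
    qed
    with c show "c * band_component a f y \<le> band_component a f (c *\<^sub>R y)" by (simp add: field_simps)
  qed
qed

lemma band_functional_apply: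
  assumes "0 \<le> y"
  shows "blinfun_apply (band_functional a f) y = band_component a f y"
proof -
  have "bounded_linear (cone_extension (band_component a f))"
    by (rule bounded_linear_cone_extension[where C = "norm f"])
      (auto intro: band_component_add band_component_scaleR band_component_nonneg band_component_le_norm)
  then show ?thesis
    unfolding band_functional_def using assms band_component_scaleR[of 0 0]
    by (simp add: blinfun_cone_extension_apply)
qed

lemma band_functional_nonneg: "dual_le 0 (band_functional a f)"
  by (simp add: dual_le_def band_functional_apply band_component_nonneg)

end

lemma band_component_mono:
  assumes "0 \<le> a" "a \<le> b" "dual_le 0 f" "0 \<le> y"
  shows "band_component a f y \<le> band_component b f y"
proof (rule band_component_least)
  fix t :: real assume t: "0 \<le> t"
  have "inf y (t *\<^sub>R a) \<le> inf y (t *\<^sub>R b)" using assms t by (intro inf_mono scaleR_left_mono) auto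
  then show "blinfun_apply f (inf y (t *\<^sub>R a)) \<le> band_component b f y"
    using assms t by (meson band_component_upper dual_nonneg_mono order_trans)
qed

lemma band_component_add_disjoint:
  assumes a: "0 \<le> a" and b: "0 \<le> b" and ab: "inf a b = 0" and f: "dual_le 0 f" and y: "0 \<le> y"
  shows "band_component a f y + band_component b f y \<le> band_component (a + b) f y"
proof (rule band_component_add_le)
  fix t1 t2 :: real assume t: "0 \<le> t1" "0 \<le> t2"
  let ?T = "max t1 t2"
  have "inf y (t1 *\<^sub>R a) + inf y (t2 *\<^sub>R b) \<le> inf y (?T *\<^sub>R a) + inf y (?T *\<^sub>R b)"
    using a b by (intro add_mono inf_mono scaleR_right_mono) auto
  also have "\<dots> \<le> inf y (?T *\<^sub>R (a + b))"
  proof (rule le_infI)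
    show "inf y (?T *\<^sub>R a) + inf y (?T *\<^sub>R b) \<le> y"
      using a b ab t by (intro inf_add_inf_le_of_disjoint y inf_scaleR_eq_zero) auto
    show "inf y (?T *\<^sub>R a) + inf y (?T *\<^sub>R b) \<le> ?T *\<^sub>R (a + b)"
      by (simp add: scaleR_add_right add_mono)
  qed
  finally have "blinfun_apply f (inf y (t1 *\<^sub>R a)) + blinfun_apply f (inf y (t2 *\<^sub>R b))
      \<le> blinfun_apply f (inf y (?T *\<^sub>R (a + b)))"
    using dual_nonneg_mono[OF f] by (simp add: blinfun.add_right [symmetric])
  also have "\<dots> \<le> band_component (a + b) f y"
    using a b t y by (intro band_component_upper[OF _ f]) auto
  finally show "blinfun_apply f (inf y (t1 *\<^sub>R a)) + blinfun_apply f (inf y (t2 *\<^sub>R b))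
      \<le> band_component (a + b) f y" .
qed

lemma band_component_approx:
  assumes w: "0 \<le> w" "w \<le> s" and f: "dual_le 0 f" and y: "0 \<le> y" and t: "0 \<le> t"
  shows "blinfun_apply f (inf y (t *\<^sub>R s)) \<le> band_component w f y + t * (norm f * norm (s - w))"
proof -
  have "inf y (t *\<^sub>R s) = inf y (t *\<^sub>R w + t *\<^sub>R (s - w))" by (simp add: scaleR_diff_right)
  also have "\<dots> \<le> inf y (t *\<^sub>R w) + inf y (t *\<^sub>R (s - w))"
    using y w t by (intro inf_add_le_add_inf) simp_all
  also have "\<dots> \<le> inf y (t *\<^sub>R w) + t *\<^sub>R (s - w)" by (intro add_mono) auto
  finally have "blinfun_apply f (inf y (t *\<^sub>R s)) \<le> blinfun_apply f (inf y (t *\<^sub>R w) + t *\<^sub>R (s - w))"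
    by (rule dual_nonneg_mono[OF f])
  also have "\<dots> = blinfun_apply f (inf y (t *\<^sub>R w)) + t * blinfun_apply f (s - w)"
    by (simp add: blinfun.add_right blinfun.scaleR_right)
  also have "\<dots> \<le> band_component w f y + t * (norm f * norm (s - w))"
    using band_component_upper[OF w(1) f y t] blinfun_apply_le_norm[of f "s - w"] t
    by (intro add_mono mult_left_mono) auto
  finally show ?thesis .
qed

section \<open>Positive functionals on disjoint sequences\<close>

lemma inf_partial_sum_tail_eq_zero:
  fixes e :: "nat \<Rightarrow> 'a::banach_lattice"
  assumes e: "summable e" "\<And>n. 0 \<le> e n" and disj: "\<And>i j. i \<noteq> j \<Longrightarrow> inf (e i) (e j) = 0"
  shows "inf (sum e {..<N}) (suminf e - sum e {..<N}) = 0"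
proof -
  let ?w = "\<lambda>N. sum e {..<N}"
  have "norm (inf (?w N) (suminf e - ?w N)) \<le> norm (suminf e - ?w K)" if "N \<le> K" for K
  proof -
    have "inf (e i) (sum e {N..<K}) = 0" if "i < N" for i
      using that by (intro inf_sum_eq_zero e(2) disj) auto
    then have "inf (sum e {N..<K}) (?w N) = 0"
      by (intro inf_sum_eq_zero) (auto simp: e(2) sum_nonneg inf_commute)
    moreover have "?w K - ?w N = sum e {N..<K}"
      using \<open>N \<le> K\<close> by (metis atLeast0LessThan sum.atLeastLessThan_concat le0 add_diff_cancel_left')
    ultimately have disjoint: "inf (?w N) (?w K - ?w N) = 0" by (simp add: inf_commute)
    have "?w N \<le> ?w K" "?w K \<le> suminf e"
      using \<open>N \<le> K\<close> by (simp_all add: sum_mono2 e sum_le_suminf_nonneg)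
    then have "inf (?w N) (suminf e - ?w N) \<le> inf (?w N) (?w K - ?w N) + inf (?w N) (suminf e - ?w K)"
      using inf_add_le_add_inf[of "?w N" "?w K - ?w N" "suminf e - ?w K"] e(2) by (simp add: sum_nonneg)
    also have "\<dots> \<le> suminf e - ?w K" using disjoint by simp
    finally show ?thesis
      using e(2) sum_le_suminf_nonneg[OF e] by (intro norm_mono_nonneg) (simp_all add: sum_nonneg)
  qed
  moreover have "(\<lambda>K. norm (suminf e - ?w K)) \<longlonglongrightarrow> 0"
    using tendsto_diff[OF tendsto_const summable_LIMSEQ[OF e(1)], of "suminf e"]
    by (simp add: tendsto_norm_zero)
  ultimately have "norm (inf (?w N) (suminf e - ?w N)) \<le> 0"
    by (intro tendsto_le[OF _ _ tendsto_const]) (auto intro: eventually_mono[OF eventually_ge_at_top])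
  then show ?thesis by simp
qed

context
  fixes f :: "'a::banach_lattice \<Rightarrow>\<^sub>L real" and w :: "nat \<Rightarrow> 'a" and s :: 'a
  assumes f: "dual_le 0 f"
    and w: "\<And>N. 0 \<le> w N" "\<And>N. w N \<le> s" "w \<longlonglongrightarrow> s"
    and disjoint: "\<And>N. inf (w N) (s - w N) = 0"
begin

lemma le_zero_of_le_band_components_of_tails:
  assumes y: "0 \<le> y" and c: "\<And>N. c \<le> band_component (s - w N) f y"
  shows "c \<le> 0"
proof -
  have tail: "(\<lambda>N. norm (s - w N)) \<longlonglongrightarrow> 0"
    using tendsto_diff[OF tendsto_const w(3), of s] by (simp add: tendsto_norm_zero)
  have "blinfun_apply f (inf y (t *\<^sub>R s)) \<le> band_component s f y - c" if t: "0 \<le> t" for t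
  proof -
    have lim: "(\<lambda>N. band_component s f y - c + t * (norm f * norm (s - w N)))
        \<longlonglongrightarrow> band_component s f y - c + t * (norm f * 0)"
      by (intro tendsto_intros tail)
    have split: "band_component (w N) f y + band_component (s - w N) f y \<le> band_component s f y" for N
      using band_component_add_disjoint[OF w(1) _ disjoint f y, of N] w(2)[of N] by simp
    have "blinfun_apply f (inf y (t *\<^sub>R s)) \<le> band_component s f y - c + t * (norm f * norm (s - w N))"
      for N using band_component_approx[OF w(1,2) f y t, of N] split[of N] c[of N] by linarith
    then show ?thesis using tendsto_le[OF _ lim tendsto_const] by simp
  qed
  then have "band_component s f y \<le> band_component s f y - c"
    by (rule band_component_least)
  then show ?thesis by simp
qed

lemma band_functionals_of_tails_norm_small:
  assumes oc: "dual_order_continuous TYPE('a)" and mono: "incseq w" and r: "r > 0"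
  shows "\<exists>N. norm (band_functional (s - w N) f) < r"
proof -
  let ?P = "\<lambda>N. band_functional (s - w N) f"
  have tails: "0 \<le> s - w N" for N using w(2)[of N] by simp
  have apply_P: "blinfun_apply (?P N) y = band_component (s - w N) f y" if "0 \<le> y" for N y
    using band_functional_apply[OF tails f that] .
  have "dual_le (?P K) (?P N)" if "N \<le> K" for N K
    unfolding dual_le_def using mono that
    by (auto simp: apply_P incseq_def intro!: band_component_mono[OF tails _ f] diff_left_mono)
  then have directed: "\<exists>h\<in>range ?P. dual_le h g1 \<and> dual_le h g2" if "g1 \<in> range ?P" "g2 \<in> range ?P" for g1 g2
    using that by (metis (no_types, lifting) max.cobounded1 max.cobounded2 rangeE rangeI)
  have nonneg: "dual_le 0 g" if "g \<in> range ?P" for g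
    using that band_functional_nonneg[OF tails f] by blast
  have inf_zero: "dual_le h 0" if "\<forall>g\<in>range ?P. dual_le h g" for h
    unfolding dual_le_def
  proof (intro allI impI)
    fix y :: 'a assume "0 \<le> y"
    with that have "blinfun_apply h y \<le> band_component (s - w N) f y" for N
      by (auto simp: dual_le_def apply_P)
    with \<open>0 \<le> y\<close> show "blinfun_apply h y \<le> blinfun_apply 0 y"
      using le_zero_of_le_band_components_of_tails by simp
  qed
  from oc[unfolded dual_order_continuous_def, rule_format, of "range ?P"] directed nonneg inf_zero r
  show ?thesis by blast
qed

end

lemma dual_nonneg_disjoint_null:
  fixes f :: "'a::banach_lattice \<Rightarrow>\<^sub>L real" and d :: "nat \<Rightarrow> 'a"
  assumes oc: "dual_order_continuous TYPE('a)" and f: "dual_le 0 f"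
    and d: "\<And>n. 0 \<le> d n" "\<And>n. norm (d n) \<le> M"
    and disjoint: "\<And>n m. n \<noteq> m \<Longrightarrow> inf (d n) (d m) = 0"
  shows "(\<lambda>n. blinfun_apply f (d n)) \<longlonglongrightarrow> 0"
proof -
  define e where "e n = (1/2)^n *\<^sub>R d n" for n
  define w where "w N = sum e {..<N}" for N
  define s where "s = suminf e"
  have e: "0 \<le> e n" for n using d by (simp add: e_def)
  have summable: "summable e"
  proof (rule summable_comparison_test')
    show "summable (\<lambda>n. M * (1/2)^n)" by (intro summable_mult summable_geometric) simp
    show "norm (e n) \<le> M * (1/2)^n" for n using d(2)[of n] by (simp add: e_def mult.commute)
  qed
  have w: "0 \<le> w N" "w N \<le> s" for N
    unfolding w_def s_def using e by (simp_all add: sum_nonneg sum_le_suminf_nonneg[OF summable])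
  have lim: "w \<longlonglongrightarrow> s" unfolding w_def s_def by (rule summable_LIMSEQ[OF summable])
  have mono: "incseq w" unfolding w_def incseq_def by (simp add: e sum_mono2)
  have tail_disjoint: "inf (w N) (s - w N) = 0" for N
    unfolding w_def s_def using summable e
    by (rule inf_partial_sum_tail_eq_zero) (simp add: e_def inf_scaleR_eq_zero d disjoint)
  have small: "\<exists>N. norm (band_functional (s - w N) f) < r" if "r > 0" for r
    by (rule band_functionals_of_tails_norm_small[OF f w lim tail_disjoint oc mono that])
  have in_band: "d n \<le> (2^n) *\<^sub>R (s - w N)" if "N \<le> n" for N n
  proof -
    have "w N + e n \<le> w (Suc n)" using that by (simp add: w_def e sum_mono2)
    then have "(2^n) *\<^sub>R e n \<le> (2^n) *\<^sub>R (s - w N)"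
      using w(2)[of "Suc n"] by (intro scaleR_left_mono) (simp_all add: algebra_simps)
    then show ?thesis by (simp add: e_def power_one_over)
  qed
  have M: "0 \<le> M" using d(2)[of 0] norm_ge_zero order_trans by blast
  show ?thesis
  proof (rule LIMSEQ_I)
    fix r :: real assume "r > 0"
    with M obtain N where N: "norm (band_functional (s - w N) f) * (M + 1) < r"
      using small[of "r / (M + 1)"] by (auto simp: pos_less_divide_eq)
    have "norm (blinfun_apply f (d n)) < r" if "N \<le> n" for n
    proof -
      have tail: "0 \<le> s - w N" using w(2)[of N] by simp
      have "blinfun_apply f (d n) = blinfun_apply (band_functional (s - w N) f) (d n)"
        using band_component_eq_apply[OF tail f d(1) _ in_band[OF that]]
        by (simp add: band_functional_apply[OF tail f d(1)])
      also have "\<dots> \<le> norm (band_functional (s - w N) f) * (M + 1)"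
        using blinfun_apply_le_norm d(2)[of n] by (smt (verit) mult_left_mono norm_ge_zero)
      finally show ?thesis using N dual_nonneg_apply[OF f d(1)] by simp
    qed
    then show "\<exists>N. \<forall>n\<ge>N. norm (blinfun_apply f (d n) - 0) < r" by auto
  qed
qed

section \<open>Disjointification\<close>

definition weighted_tail :: "(nat \<Rightarrow> 'a::real_normed_vector) \<Rightarrow> nat \<Rightarrow> 'a" where
  "weighted_tail a k = (\<Sum>i. (1/2)^(i + Suc k) *\<^sub>R a (i + Suc k))"

text \<open>Subtracting \<open>4\<^sup>k\<close> times the earlier terms and \<open>2\<^sup>-\<^sup>k\<close> times the weighted later terms
  makes \<open>d = disjointification a\<close> satisfy, for \<open>j < k\<close>, \<open>d j \<le> (a j - 4\<^sup>-\<^sup>k a k)\<^sup>+\<close> and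
  \<open>d k \<le> (a k - 4\<^sup>k a j)\<^sup>+\<close>, which are disjoint.\<close>
definition disjointification :: "(nat \<Rightarrow> 'a::banach_lattice) \<Rightarrow> nat \<Rightarrow> 'a" where
  "disjointification a k = pprt (a k - 4^k *\<^sub>R (\<Sum>j<k. a j) - (1/2)^k *\<^sub>R weighted_tail a k)"

lemma disjointification_lower:
  assumes "0 \<le> weighted_tail a k"
  shows "a k - inf (a k) (4^k *\<^sub>R (\<Sum>j<k. a j)) - (1/2)^k *\<^sub>R weighted_tail a k
    \<le> disjointification a k"
  unfolding disjointification_def using assms by (intro diff_inf_diff_le_pprt) simp

context
  fixes a :: "nat \<Rightarrow> 'a::banach_lattice" and M :: real
  assumes a: "\<And>n. 0 \<le> a n" "\<And>n. norm (a n) \<le> M"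
begin

lemma summable_weighted_tail: "summable (\<lambda>i. (1/2)^(i + Suc k) *\<^sub>R a (i + Suc k))"
  and norm_weighted_tail_le: "norm (weighted_tail a k) \<le> 2 * M"
proof -
  have term_le: "norm ((1/2)^(i + Suc k) *\<^sub>R a (i + Suc k)) \<le> M * (1/2)^i" for i
  proof -
    have "norm ((1/2)^(i + Suc k) *\<^sub>R a (i + Suc k)) = (1/2)^(i + Suc k) * norm (a (i + Suc k))"
      by simp
    also have "\<dots> \<le> (1/2)^i * M"
      using a(2) by (intro mult_mono power_decreasing) auto
    finally show ?thesis by (simp add: mult.commute)
  qed
  have geometric: "summable (\<lambda>i. M * (1/2::real)^i)" by (intro summable_mult summable_geometric) simp
  show "summable (\<lambda>i. (1/2)^(i + Suc k) *\<^sub>R a (i + Suc k))"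
    by (rule summable_comparison_test'[OF geometric term_le])
  have "norm (weighted_tail a k) \<le> (\<Sum>i. M * (1/2::real)^i)"
    unfolding weighted_tail_def by (rule norm_suminf_le[OF term_le geometric])
  also have "\<dots> = 2 * M" by (simp add: suminf_mult suminf_geometric)
  finally show "norm (weighted_tail a k) \<le> 2 * M" .
qed

lemma weighted_tail_nonneg: "0 \<le> weighted_tail a k"
  using sum_le_suminf_nonneg[OF summable_weighted_tail, of k 0] a(1) by (simp add: weighted_tail_def)

lemma scaleR_le_weighted_tail:
  assumes "j < k"
  shows "(1/2)^k *\<^sub>R a k \<le> weighted_tail a j"
proof -
  have "k - Suc j + Suc j = k" using assms by simp
  then show ?thesis
    using le_suminf_nonneg[OF summable_weighted_tail, of j "k - Suc j"] a(1)
    by (simp add: weighted_tail_def)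
qed

lemma disjointification_nonneg: "0 \<le> disjointification a k"
  by (simp add: disjointification_def)

lemma disjointification_le: "disjointification a k \<le> a k"
proof -
  have "a k - 4^k *\<^sub>R (\<Sum>j<k. a j) - (1/2)^k *\<^sub>R weighted_tail a k \<le> a k - 0"
    using a(1) weighted_tail_nonneg[of k] by (intro diff_diff_le_diff) (simp add: sum_nonneg)
  then have "disjointification a k \<le> pprt (a k)"
    unfolding disjointification_def by simp
  then show ?thesis using a(1) by simp
qed

lemma disjointification_disjoint_less:
  assumes "j < k"
  shows "inf (disjointification a j) (disjointification a k) = 0"
proof -
  have "a j \<le> (\<Sum>i<k. a i)"
    using sum_mono2[of "{..<k}" "{j}" a] assms a(1) by simp
  then have "a k - 4^k *\<^sub>R (\<Sum>j<k. a j) - (1/2)^k *\<^sub>R weighted_tail a k \<le> a k - 4^k *\<^sub>R a j"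
    using weighted_tail_nonneg[of k] by (intro diff_diff_le_diff add_increasing2) (simp_all add: scaleR_left_mono)
  then have dk: "disjointification a k \<le> pprt (a k - 4^k *\<^sub>R a j)"
    unfolding disjointification_def by (rule pprt_mono)
  have "(1/4^k) *\<^sub>R a k \<le> (1/2)^j *\<^sub>R ((1/2)^k *\<^sub>R a k)"
  proof -
    have "(2::real)^(j + k) \<le> 2^(k + k)" using assms by (intro power_increasing) auto
    then have "1/4^k \<le> (1/2::real)^j * (1/2)^k"
      by (simp add: power_add power_one_over frac_le flip: power_mult_distrib)
    then show ?thesis using a(1) by (simp add: scaleR_right_mono)
  qed
  also have "\<dots> \<le> (1/2)^j *\<^sub>R weighted_tail a j"
    using scaleR_le_weighted_tail[OF assms] by (intro scaleR_left_mono) simp_all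
  finally have "a j - 4^j *\<^sub>R (\<Sum>i<j. a i) - (1/2)^j *\<^sub>R weighted_tail a j \<le> a j - (1/4^k) *\<^sub>R a k"
    using a(1) by (intro diff_diff_le_diff add_increasing) (simp_all add: sum_nonneg)
  then have dj: "disjointification a j \<le> pprt (a j - (1/4^k) *\<^sub>R a k)"
    unfolding disjointification_def by (rule pprt_mono)
  have "inf (disjointification a j) (disjointification a k)
      \<le> inf (pprt (a j - (1/4^k) *\<^sub>R a k)) (pprt (a k - 4^k *\<^sub>R a j))"
    by (rule inf_mono[OF dj dk])
  also have "\<dots> = 0"
    using inf_pprt_diff_scaleR_eq_zero[of "4^k" "a k" "a j"] by (simp add: inf_commute)
  finally show ?thesis using disjointification_nonneg by (simp add: antisym)
qed


lemma disjointification_disjoint: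
  assumes "j \<noteq> k"
  shows "inf (disjointification a j) (disjointification a k) = 0"
proof (cases "j < k")
  case False
  with assms have "k < j" by simp
  then show ?thesis using disjointification_disjoint_less[of k j] by (simp add: inf_commute)
qed (rule disjointification_disjoint_less)

lemma norm_disjointification_le: "norm (disjointification a k) \<le> M"
  using norm_mono_nonneg[OF disjointification_nonneg disjointification_le] a(2) by (rule order_trans)

lemma dual_nonneg_disjointification_ge:
  assumes g: "dual_le 0 g"
  shows "blinfun_apply g (a k) - blinfun_apply g (inf (a k) (4^k *\<^sub>R (\<Sum>j<k. a j)))
    - (1/2)^k * (norm g * (2 * M)) \<le> blinfun_apply g (disjointification a k)"
proof -
  have "blinfun_apply g (weighted_tail a k) \<le> norm g * (2 * M)"
    using norm_weighted_tail_le by (intro order_trans[OF blinfun_apply_le_norm] mult_left_mono) simp_all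
  then have "(1/2)^k * blinfun_apply g (weighted_tail a k) \<le> (1/2)^k * (norm g * (2 * M))"
    by (intro mult_left_mono) simp_all
  moreover have "blinfun_apply g (a k - inf (a k) (4^k *\<^sub>R (\<Sum>j<k. a j)) - (1/2)^k *\<^sub>R weighted_tail a k)
      \<le> blinfun_apply g (disjointification a k)"
    by (intro dual_nonneg_mono[OF g] disjointification_lower weighted_tail_nonneg)
  moreover have "blinfun_apply g (a k - inf (a k) (4^k *\<^sub>R (\<Sum>j<k. a j)) - (1/2)^k *\<^sub>R weighted_tail a k)
      = blinfun_apply g (a k) - blinfun_apply g (inf (a k) (4^k *\<^sub>R (\<Sum>j<k. a j)))
        - (1/2)^k * blinfun_apply g (weighted_tail a k)"
    by (simp add: blinfun.diff_right blinfun.scaleR_right del: diff_inf_eq_sup)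
  ultimately show ?thesis by linarith
qed
end

section \<open>Bounded uaw-null sequences\<close>

lemma greedy_nonneg_sequence:
  fixes P :: "nat \<Rightarrow> 'a::ordered_comm_monoid_add \<Rightarrow> 'a \<Rightarrow> bool"
  assumes "\<And>k S. 0 \<le> S \<Longrightarrow> \<exists>y. 0 \<le> y \<and> P k y S"
  shows "\<exists>a. \<forall>k. 0 \<le> a k \<and> P k (a k) (\<Sum>j<k. a j)"
proof -
  define choice where "choice k S = (SOME y. 0 \<le> y \<and> P k y S)" for k S
  define S where "S = rec_nat 0 (\<lambda>k S. S + choice k S)"
  have choice: "0 \<le> choice k S \<and> P k (choice k S) S" if "0 \<le> S" for k S
    unfolding choice_def using someI_ex[OF assms[OF that]] .
  have S_nonneg: "0 \<le> S k" for k
    by (induction k) (simp_all add: S_def choice)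
  have "S k = (\<Sum>j<k. choice j (S j))" for k
    by (induction k) (simp_all add: S_def)
  then show ?thesis using choice[OF S_nonneg] by metis
qed

lemma dual_nonneg_uaw_null:
  fixes g :: "'a::banach_lattice \<Rightarrow>\<^sub>L real" and x :: "nat \<Rightarrow> 'a"
  assumes oc: "dual_order_continuous TYPE('a)" and g: "dual_le 0 g"
    and x: "\<And>n. 0 \<le> x n" "\<And>n. norm (x n) \<le> M"
    and uaw: "\<And>u. 0 \<le> u \<Longrightarrow> (\<lambda>n. blinfun_apply g (inf (x n) u)) \<longlonglongrightarrow> 0"
  shows "(\<lambda>n. blinfun_apply g (x n)) \<longlonglongrightarrow> 0"
proof (rule ccontr)
  assume "\<not> (\<lambda>n. blinfun_apply g (x n)) \<longlonglongrightarrow> 0"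
  then obtain \<delta> where \<delta>: "\<delta> > 0" and freq: "\<exists>\<^sub>F n in sequentially. \<delta> \<le> blinfun_apply g (x n)"
    using dual_nonneg_apply[OF g x(1)] by (auto simp: tendsto_iff not_eventually dist_real_def not_less)
  have "\<exists>y. 0 \<le> y \<and> norm y \<le> M \<and> \<delta> \<le> blinfun_apply g y \<and> blinfun_apply g (inf y (4^k *\<^sub>R S)) < \<delta>/4"
    if "0 \<le> S" for k S
  proof -
    have "\<forall>\<^sub>F n in sequentially. blinfun_apply g (inf (x n) (4^k *\<^sub>R S)) < \<delta>/4"
      using \<delta> that by (intro order_tendstoD(2)[OF uaw]) simp_all
    from frequently_ex[OF frequently_eventually_conj[OF freq this]] x show ?thesis by blast
  qed
  then obtain a where a: "\<And>k. 0 \<le> a k" "\<And>k. norm (a k) \<le> M" "\<And>k. \<delta> \<le> blinfun_apply g (a k)"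
    and a_small: "\<And>k. blinfun_apply g (inf (a k) (4^k *\<^sub>R (\<Sum>j<k. a j))) < \<delta>/4"
    using greedy_nonneg_sequence[where P = "\<lambda>k y S. norm y \<le> M \<and> \<delta> \<le> blinfun_apply g y
      \<and> blinfun_apply g (inf y (4^k *\<^sub>R S)) < \<delta>/4"] by metis
  let ?d = "disjointification a" and ?C = "norm g * (2 * M)"
  have lower: "3/4 * \<delta> - (1/2)^k * ?C \<le> blinfun_apply g (?d k)" for k
    using dual_nonneg_disjointification_ge[where a = a and k = k, OF a(1,2) g] a(3)[of k] a_small[of k] by linarith
  have "\<forall>\<^sub>F k in sequentially. (1/2)^k * ?C < \<delta>/4"
    using \<delta> by (intro order_tendstoD(2)[OF tendsto_mult_left_zero[OF LIMSEQ_power_zero]]) simp_all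
  moreover have "\<forall>\<^sub>F k in sequentially. blinfun_apply g (?d k) < \<delta>/2"
    using \<delta> disjointification_nonneg[OF a(1,2)] norm_disjointification_le[OF a(1,2)]
      disjointification_disjoint[OF a(1,2)]
    by (intro order_tendstoD(2)[OF dual_nonneg_disjoint_null[OF oc g]]) simp_all
  ultimately have "\<forall>\<^sub>F k in sequentially. (1/2)^k * ?C < \<delta>/4 \<and> blinfun_apply g (?d k) < \<delta>/2"
    by (rule eventually_conj)
  then obtain k where "(1/2)^k * ?C < \<delta>/4" "blinfun_apply g (?d k) < \<delta>/2"
    unfolding eventually_sequentially by blast
  with lower[of k] show False by simp
qed

lemma bounded_uaw_null_imp_weakly_null:
  fixes x :: "nat \<Rightarrow> 'a::banach_lattice"
  assumes oc: "dual_order_continuous TYPE('a)" and bounded: "bounded (range x)" and uaw: "uaw_null x"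
  shows "weakly_null x"
  unfolding weakly_null_def
proof
  fix F :: "'a \<Rightarrow>\<^sub>L real"
  obtain M where M: "\<And>n. norm (x n) \<le> M" using bounded unfolding bounded_iff by blast
  have "(\<lambda>n. blinfun_apply (2 *\<^sub>R dual_pprt F - F) (lmod (x n))) \<longlonglongrightarrow> 0"
  proof (rule dual_nonneg_uaw_null[OF oc dual_nonneg_modulus])
    show "0 \<le> lmod (x n)" "norm (lmod (x n)) \<le> M" for n using lmod_nonneg M by simp_all
    show "(\<lambda>n. blinfun_apply (2 *\<^sub>R dual_pprt F - F) (inf (lmod (x n)) u)) \<longlonglongrightarrow> 0" if "0 \<le> u" for u
      using uaw that unfolding uaw_null_def weakly_null_def by blast
  qed
  then show "(\<lambda>n. blinfun_apply F (x n)) \<longlonglongrightarrow> 0"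
    by (rule Lim_null_comparison[rotated]) (simp add: abs_blinfun_apply_le_lmod)
qed

theorem proposition2p1:
  fixes T :: "'a::banach_lattice \<Rightarrow>\<^sub>L 'b::banach"
  assumes "dual_order_continuous TYPE('a)"
    and "dunford_pettis T"
  shows "uaw_dunford_pettis T"
  using assms bounded_uaw_null_imp_weakly_null
  unfolding uaw_dunford_pettis_def dunford_pettis_def by blast

end
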